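(* Let $k\ge4$, let $\sigma=\sigma_1\cdots\sigma_{k-2}\in\mathfrak S_{k-2}$ be a consecutive pattern, and let $1\text{-}\sigma\text{-}k$ denote the generalized pattern $1\text{-}(\sigma_1+1)\cdots(\sigma_{k-2}+1)\text{-}k$. Then $$\lim_{n\to\infty}\left(\frac{\alpha_n(1\text{-}\sigma\text{-}k)}{n!}\right)^{1/n}=\lim_{n\to\infty}\left(\frac{\alpha_n(\sigma)}{n!}\right)^{1/n}.$$
   Context: $\mathfrak S_n$ is the symmetric group on $\{1,\dots,n\}$, permutations in one-line notation. A generalized pattern of length $m$ is a permutation $\sigma_1\cdots\sigma_m\in\mathfrak S_m$ with, between each pair of adjacent entries, either a dash "-" or nothing. A permutation $\pi\in\mathfrak S_n$ contains it if there are indices $i_1<\dots<i_m$ with $i_{j+1}=i_j+1$ whenever there is no dash between $\sigma_j$ and $\sigma_{j+1}$, and with $\pi_{i_a}<\pi_{i_b}$ iff $\sigma_a<\sigma_b$ for all $a,b$; otherwise $\pi$ avoids it. A consecutive pattern has no dashes. $\alpha_n(\sigma)$ is the number of permutations in $\mathfrak S_n$ avoiding $\sigma$. *)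

theory Defs
  imports Complex_Main
begin

definition perms :: "nat \<Rightarrow> nat list set" where
  "perms n = {p. distinct p \<and> set p = {1..n}}"

text \<open>A generalized pattern is a pair (s, D): s is a permutation of {1..m} in one-line
  notation, and D is the set of (0-based) positions j such that there is a dash between
  the entries s!j and s!(j+1).  A consecutive pattern has D = {}.\<close>
definition contains :: "nat list \<Rightarrow> nat list \<times> nat set \<Rightarrow> bool" where
  "contains p pat = (let s = fst pat; D = snd pat; m = length s in
     \<exists>idx :: nat \<Rightarrow> nat.
        (\<forall>a<m. idx a < length p) \<and>
        (\<forall>a b. a < b \<and> b < m \<longrightarrow> idx a < idx b) \<and>
        (\<forall>j. j + 1 < m \<and> j \<notin> D \<longrightarrow> idx (j + 1) = idx j + 1) \<and>
        (\<forall>a<m. \<forall>b<m. (p ! idx a < p ! idx b) \<longleftrightarrow> (s ! a < s ! b)))"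

definition avoiders :: "nat \<Rightarrow> nat list \<times> nat set \<Rightarrow> nat" where
  "avoiders n pat = card {p \<in> perms n. \<not> contains p pat}"

definition one_sigma_k :: "nat list \<Rightarrow> nat list \<times> nat set" where
  "one_sigma_k s = (1 # map Suc s @ [length s + 2], {0, length s})"

end

theory Submission
  imports Defs "HOL-Combinatorics.Multiset_Permutations" "HOL-Real_Asymp.Real_Asymp"
begin

text \<open>Let \<open>m = k - 2\<close> and let \<open>a n\<close>, \<open>u n\<close>, \<open>t n\<close> be the fractions of the permutations
  of length \<open>n\<close> that avoid \<open>\<sigma>\<close>, \<open>\<sigma>-(m+1)\<close> and \<open>1-\<sigma>-k\<close>, respectively. Cutting a permutation
  of length \<open>i + j\<close> after its first \<open>i\<close> entries gives \<open>a (i + j) \<le> a i * a j\<close>, so by Fekete's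
  lemma \<open>root n (a n)\<close> converges to \<open>L = inf root n (a n)\<close>; and \<open>a n \<le> t n\<close> because an
  occurrence of \<open>1-\<sigma>-k\<close> contains one of \<open>\<sigma>\<close>.

  For the upper bound, cut a permutation at its largest, resp. smallest, entry: before the maximum
  of a permutation avoiding \<open>\<sigma>-(m+1)\<close> no \<open>\<sigma>\<close> can occur, and after the minimum of a permutation
  avoiding \<open>1-\<sigma>-k\<close> no \<open>\<sigma>-(m+1)\<close> can occur. Hence
  \<open>(n + 1) * u (n + 1) \<le> (\<Sum>j\<le>n. u j * a (n - j))\<close> and
  \<open>(n + 1) * t (n + 1) \<le> (\<Sum>j\<le>n. t j * u (n - j))\<close>. Such a convolution inequality turns a
  geometric bound \<open>c ^ n\<close> for the second factor into the bound \<open>(n + 1) ^ M * c ^ n\<close> for the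
  first, so neither \<open>u\<close> nor \<open>t\<close> grows exponentially faster than \<open>a\<close>.\<close>

section \<open>Counting permutations up to order isomorphism\<close>

definition count_perms :: "(nat list \<Rightarrow> bool) \<Rightarrow> nat set \<Rightarrow> nat" where
  "count_perms Q V = card {p \<in> permutations_of_set V. Q p}"

definition order_invariant :: "(nat list \<Rightarrow> bool) \<Rightarrow> bool" where
  "order_invariant Q \<longleftrightarrow> (\<forall>p f. strict_mono_on (set p) f \<longrightarrow> Q (map f p) = Q p)"

lemma count_perms_le_fact: "finite V \<Longrightarrow> count_perms Q V \<le> fact (card V)"
proof -
  assume "finite V"
  have "count_perms Q V \<le> card (permutations_of_set V)"
    unfolding count_perms_def by (intro card_mono) auto
  with \<open>finite V\<close> show ?thesis
    by simp
qed

lemma count_perms_image: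
  assumes Q: "order_invariant Q" and f: "strict_mono_on V f"
  shows "count_perms Q (f ` V) = count_perms Q V"
proof -
  have inj: "inj_on f V"
    using f by (rule strict_mono_on_imp_inj_on)
  have "{p \<in> permutations_of_set V. Q (map f p)} = {p \<in> permutations_of_set V. Q p}"
    using Q f unfolding order_invariant_def by (auto dest: permutations_of_setD)
  moreover have "{q \<in> permutations_of_set (f ` V). Q q} =
                   map f ` {p \<in> permutations_of_set V. Q (map f p)}"
    unfolding permutations_of_set_image_inj[OF inj] by blast
  moreover have "inj_on (map f) (permutations_of_set V)"
  proof (rule inj_onI)
    fix p q assume "p \<in> permutations_of_set V" "q \<in> permutations_of_set V" "map f p = map f q"
    then show "p = q"
      using inj map_inj_on[of f p q] by (simp add: permutations_of_set_def)
  qed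
  ultimately show ?thesis
    unfolding count_perms_def by (simp add: card_image inj_on_subset)
qed

lemma count_perms_eq_atLeastAtMost:
  assumes Q: "order_invariant Q" and V: "finite V"
  shows "count_perms Q V = count_perms Q {1..card V}"
proof -
  define xs where "xs = sorted_list_of_set V"
  have xs: "sorted_wrt (<) xs" "set xs = V" "length xs = card V"
    using V by (simp_all add: xs_def)
  define f where "f i = xs ! (i - 1)" for i
  have "strict_mono_on {1..card V} f"
    by (rule strict_mono_onI) (auto simp: f_def xs intro: sorted_wrt_nth_less[OF xs(1)])
  moreover have "f ` {1..card V} = V"
  proof -
    have "{1..card V} = Suc ` {..<length xs}"
      by (simp add: xs(3) image_Suc_lessThan)
    then have "f ` {1..card V} = (!) xs ` {..<length xs}"
      by (simp add: image_image f_def)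
    then show ?thesis
      by (auto simp: in_set_conv_nth simp flip: xs(2))
  qed
  ultimately show ?thesis
    using count_perms_image[OF Q, of "{1..card V}" f] by simp
qed

lemma order_invariant_length_eq: "order_invariant Q \<Longrightarrow> order_invariant (\<lambda>p. Q p \<and> length p = n)"
  by (simp add: order_invariant_def)

lemma count_perms_length_eq:
  "count_perms (\<lambda>p. Q p \<and> length p = n) V = (if card V = n then count_perms Q V else 0)"
proof -
  have "{p \<in> permutations_of_set V. Q p \<and> length p = n} =
          (if card V = n then {p \<in> permutations_of_set V. Q p} else {})"
    by (auto simp: length_finite_permutations_of_set)
  then show ?thesis
    by (simp add: count_perms_def)
qed

lemma sum_Pow_card:
  fixes g :: "nat \<Rightarrow> 'a::comm_semiring_1"
  assumes "finite A"
  shows "(\<Sum>V\<in>Pow A. g (card V)) = (\<Sum>j\<le>card A. of_nat (card A choose j) * g j)"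
proof -
  have "(\<Sum>V\<in>Pow A. g (card V)) = (\<Sum>j\<le>card A. \<Sum>V | V \<in> Pow A \<and> card V = j. g (card V))"
    using assms by (intro sum.group[symmetric]) (auto intro: card_mono)
  also have "\<dots> = (\<Sum>j\<le>card A. \<Sum>V | V \<subseteq> A \<and> card V = j. g j)"
    by (intro sum.cong) auto
  finally show ?thesis
    by (simp add: n_subsets[OF assms])
qed

lemma permutations_of_set_split:
  assumes "p \<in> permutations_of_set V" "x \<in> V"
  obtains xs ys where "p = xs @ x # ys" "set xs \<union> set ys = V - {x}"
proof -
  obtain xs ys where p: "p = xs @ x # ys"
    using assms split_list[of x p] by (auto simp: permutations_of_set_def)
  moreover have "set xs \<union> set ys = V - {x}"
    using assms(1) unfolding p by (auto simp: permutations_of_set_def)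
  ultimately show ?thesis
    using that by blast
qed

text \<open>The concatenations \<open>p1 @ mid @ p2\<close> cover the left-hand side; grouping the pairs by the
  entry set of \<open>p1\<close> and renormalizing both parts gives the binomial convolution.\<close>

lemma count_perms_split_le:
  assumes W: "finite W" and m: "card (W - set mid) = m"
    and QL: "order_invariant QL" and QR: "order_invariant QR"
    and split: "\<And>p. p \<in> permutations_of_set W \<Longrightarrow> Q p \<Longrightarrow>
                  \<exists>p1 p2. p = p1 @ mid @ p2 \<and> QL p1 \<and> QR p2"
  shows "count_perms Q W \<le>
           (\<Sum>j\<le>m. (m choose j) * count_perms QL {1..j} * count_perms QR {1..m - j})"
proof -
  define R where "R = W - set mid"
  define P where "P V = {p \<in> permutations_of_set V. QL p} \<times> {p \<in> permutations_of_set (R - V). QR p}"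
    for V
  have R: "finite R"
    using W by (simp add: R_def)
  have "{p \<in> permutations_of_set W. Q p} \<subseteq> (\<lambda>(p1, p2). p1 @ mid @ p2) ` (\<Union>V\<in>Pow R. P V)"
  proof
    fix p assume "p \<in> {p \<in> permutations_of_set W. Q p}"
    then obtain p1 p2 where p: "p = p1 @ mid @ p2" "QL p1" "QR p2" "distinct p" "set p = W"
      using split by (blast dest: permutations_of_setD)
    then have "(p1, p2) \<in> P (set p1)" "set p1 \<in> Pow R"
      by (auto simp: P_def R_def permutations_of_set_def)
    then show "p \<in> (\<lambda>(p1, p2). p1 @ mid @ p2) ` (\<Union>V\<in>Pow R. P V)"
      using p(1) by force
  qed
  moreover have "finite (\<Union>V\<in>Pow R. P V)"
    using R by (auto simp: P_def)
  ultimately have "count_perms Q W \<le> card (\<Union>V\<in>Pow R. P V)"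
    unfolding count_perms_def by (meson card_image_le card_mono finite_imageI order_trans)
  also have "\<dots> \<le> (\<Sum>V\<in>Pow R. card (P V))"
    using R by (intro card_UN_le) simp
  also have "\<dots> = (\<Sum>V\<in>Pow R. count_perms QL {1..card V} * count_perms QR {1..m - card V})"
  proof (rule sum.cong[OF refl])
    fix V assume "V \<in> Pow R"
    then have "finite V" "card (R - V) = m - card V"
      using R m by (auto simp: R_def card_Diff_subset finite_subset)
    then show "card (P V) = count_perms QL {1..card V} * count_perms QR {1..m - card V}"
      using R count_perms_eq_atLeastAtMost[OF QL, of V] count_perms_eq_atLeastAtMost[OF QR, of "R - V"]
      by (simp add: P_def card_cartesian_product count_perms_def)
  qed
  also have "\<dots> = (\<Sum>j\<le>m. (m choose j) * (count_perms QL {1..j} * count_perms QR {1..m - j}))"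
    using sum_Pow_card[OF R, of "\<lambda>j. count_perms QL {1..j} * count_perms QR {1..m - j}"] m
    by (simp add: R_def)
  finally show ?thesis
    by (simp add: mult.assoc)
qed

section \<open>Avoidance of a consecutive pattern and of its extensions\<close>

definition occurs_at :: "nat list \<Rightarrow> nat list \<Rightarrow> nat \<Rightarrow> bool" where
  "occurs_at s p i \<longleftrightarrow> i + length s \<le> length p \<and>
     (\<forall>a<length s. \<forall>b<length s. p ! (i + a) < p ! (i + b) \<longleftrightarrow> s ! a < s ! b)"

text \<open>For a pattern \<open>s\<close> of length \<open>m\<close>, the following three predicates express avoidance of the
  consecutive pattern \<open>s\<close>, of the generalized pattern \<open>s-(m+1)\<close>, and of \<open>1-(s+1)-(m+2)\<close>.\<close>

definition avoids_consec :: "nat list \<Rightarrow> nat list \<Rightarrow> bool" where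
  "avoids_consec s p \<longleftrightarrow> (\<forall>i. \<not> occurs_at s p i)"

definition avoids_consec_max :: "nat list \<Rightarrow> nat list \<Rightarrow> bool" where
  "avoids_consec_max s p \<longleftrightarrow>
     (\<forall>i j. occurs_at s p i \<and> i + length s \<le> j \<and> j < length p \<longrightarrow>
            \<not> (\<forall>a<length s. p ! (i + a) < p ! j))"

definition avoids_min_consec_max :: "nat list \<Rightarrow> nat list \<Rightarrow> bool" where
  "avoids_min_consec_max s p \<longleftrightarrow>
     (\<forall>h i j. occurs_at s p i \<and> h < i \<and> i + length s \<le> j \<and> j < length p \<longrightarrow>
              \<not> ((\<forall>a<length s. p ! h < p ! (i + a)) \<and> (\<forall>a<length s. p ! (i + a) < p ! j)))"

lemma nth_map_less_iff:
  fixes f :: "'a::linorder \<Rightarrow> 'b::linorder"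
  assumes "strict_mono_on (set p) f" "i < length p" "j < length p"
  shows "map f p ! i < map f p ! j \<longleftrightarrow> p ! i < p ! j"
  using assms strict_mono_on_less[OF assms(1) nth_mem[OF assms(2)] nth_mem[OF assms(3)]] by simp

lemma occurs_at_map:
  "strict_mono_on (set p) f \<Longrightarrow> occurs_at s (map f p) i \<longleftrightarrow> occurs_at s p i"
  unfolding occurs_at_def by (auto simp: nth_map_less_iff simp del: nth_map)

lemma order_invariant_avoids_consec: "order_invariant (avoids_consec s)"
  unfolding order_invariant_def avoids_consec_def by (simp add: occurs_at_map)

lemma order_invariant_avoids_consec_max: "order_invariant (avoids_consec_max s)"
  unfolding order_invariant_def
proof (intro allI impI)
  fix p :: "nat list" and f :: "nat \<Rightarrow> nat" assume f: "strict_mono_on (set p) f"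
  have below_iff: "(\<forall>a<length s. map f p ! (i + a) < map f p ! j) \<longleftrightarrow> (\<forall>a<length s. p ! (i + a) < p ! j)"
    if "i + length s \<le> j" "j < length p" for i j
  proof -
    have "map f p ! (i + a) < map f p ! j \<longleftrightarrow> p ! (i + a) < p ! j" if "a < length s" for a
      using that \<open>i + length s \<le> j\<close> \<open>j < length p\<close> by (intro nth_map_less_iff[OF f]) simp_all
    then show ?thesis
      by blast
  qed
  show "avoids_consec_max s (map f p) = avoids_consec_max s p"
    unfolding avoids_consec_max_def occurs_at_map[OF f] length_map
    using below_iff by (meson le_trans)
qed

lemma order_invariant_avoids_min_consec_max: "order_invariant (avoids_min_consec_max s)"
  unfolding order_invariant_def
proof (intro allI impI)
  fix p :: "nat list" and f :: "nat \<Rightarrow> nat" assume f: "strict_mono_on (set p) f"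
  have frame_iff:
    "(\<forall>a<length s. map f p ! h < map f p ! (i + a)) \<longleftrightarrow> (\<forall>a<length s. p ! h < p ! (i + a))"
    "(\<forall>a<length s. map f p ! (i + a) < map f p ! j) \<longleftrightarrow> (\<forall>a<length s. p ! (i + a) < p ! j)"
    if "h < i" "i + length s \<le> j" "j < length p" for h i j
  proof -
    have "map f p ! h < map f p ! (i + a) \<longleftrightarrow> p ! h < p ! (i + a)"
      "map f p ! (i + a) < map f p ! j \<longleftrightarrow> p ! (i + a) < p ! j" if "a < length s" for a
      using that \<open>h < i\<close> \<open>i + length s \<le> j\<close> \<open>j < length p\<close>
      by (intro nth_map_less_iff[OF f]; simp)+
    then show "(\<forall>a<length s. map f p ! h < map f p ! (i + a)) \<longleftrightarrow> (\<forall>a<length s. p ! h < p ! (i + a))"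
      "(\<forall>a<length s. map f p ! (i + a) < map f p ! j) \<longleftrightarrow> (\<forall>a<length s. p ! (i + a) < p ! j)"
      by blast+
  qed
  show "avoids_min_consec_max s (map f p) = avoids_min_consec_max s p"
    unfolding avoids_min_consec_max_def occurs_at_map[OF f] length_map
    using frame_iff by (meson le_trans)
qed

lemma occurs_at_append_left: "occurs_at s xs i \<Longrightarrow> occurs_at s (xs @ ys) i"
  unfolding occurs_at_def by (auto simp: nth_append)

lemma occurs_at_append_right: "occurs_at s ys i \<Longrightarrow> occurs_at s (xs @ ys) (length xs + i)"
  unfolding occurs_at_def by (auto simp: nth_append add.assoc)

lemma avoids_consec_append:
  "avoids_consec s (xs @ ys) \<Longrightarrow> avoids_consec s xs \<and> avoids_consec s ys"
  unfolding avoids_consec_def by (metis occurs_at_append_left occurs_at_append_right)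

lemma avoids_consec_imp_avoids_min_consec_max:
  "avoids_consec s p \<Longrightarrow> avoids_min_consec_max s p"
  by (simp add: avoids_consec_def avoids_min_consec_max_def)

lemma avoids_consec_max_append_right:
  assumes "avoids_consec_max s (xs @ ys)"
  shows "avoids_consec_max s ys"
  unfolding avoids_consec_max_def
proof (intro allI impI notI)
  fix i j assume ij: "occurs_at s ys i \<and> i + length s \<le> j \<and> j < length ys"
    and below: "\<forall>a<length s. ys ! (i + a) < ys ! j"
  let ?p = "xs @ ys" and ?k = "length xs"
  have "occurs_at s ?p (?k + i)"
    using ij by (intro occurs_at_append_right) simp
  moreover have "\<forall>a<length s. ?p ! (?k + i + a) < ?p ! (?k + j)"
    using ij below by (simp add: nth_append add.assoc)
  moreover have "?k + i + length s \<le> ?k + j" "?k + j < length ?p"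
    using ij by simp_all
  ultimately show False
    using assms unfolding avoids_consec_max_def by blast
qed

lemma avoids_consec_max_before_max:
  assumes "avoids_consec_max s (xs @ x # ys)" and "\<forall>y\<in>set xs. y < x"
  shows "avoids_consec s xs"
  unfolding avoids_consec_def
proof (intro allI notI)
  fix i assume occ: "occurs_at s xs i"
  let ?p = "xs @ x # ys"
  have "occurs_at s ?p i"
    using occurs_at_append_left[OF occ] by simp
  moreover have "\<forall>a<length s. ?p ! (i + a) < ?p ! length xs"
  proof (intro allI impI)
    fix a assume "a < length s"
    then have "i + a < length xs"
      using occ by (simp add: occurs_at_def)
    then show "?p ! (i + a) < ?p ! length xs"
      using assms(2) by (simp add: nth_append)
  qed
  moreover have "i + length s \<le> length xs" "length xs < length ?p"
    using occ by (simp_all add: occurs_at_def)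
  ultimately show False
    using assms(1) unfolding avoids_consec_max_def by blast
qed

lemma avoids_min_consec_max_append_left:
  assumes "avoids_min_consec_max s (xs @ ys)"
  shows "avoids_min_consec_max s xs"
  unfolding avoids_min_consec_max_def
proof (intro allI impI notI)
  fix h i j assume hij: "occurs_at s xs i \<and> h < i \<and> i + length s \<le> j \<and> j < length xs"
    and frame: "(\<forall>a<length s. xs ! h < xs ! (i + a)) \<and> (\<forall>a<length s. xs ! (i + a) < xs ! j)"
  let ?p = "xs @ ys"
  have "occurs_at s ?p i"
    using hij occurs_at_append_left by blast
  moreover have "(\<forall>a<length s. ?p ! h < ?p ! (i + a)) \<and> (\<forall>a<length s. ?p ! (i + a) < ?p ! j)"
    using hij frame by (auto simp: nth_append)
  moreover have "j < length ?p"
    using hij by simp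
  ultimately show False
    using assms hij unfolding avoids_min_consec_max_def by blast
qed

lemma avoids_min_consec_max_after_min:
  assumes "avoids_min_consec_max s (xs @ x # ys)" and "\<forall>y\<in>set ys. x < y"
  shows "avoids_consec_max s ys"
  unfolding avoids_consec_max_def
proof (intro allI impI notI)
  fix i j assume ij: "occurs_at s ys i \<and> i + length s \<le> j \<and> j < length ys"
    and below: "\<forall>a<length s. ys ! (i + a) < ys ! j"
  let ?p = "(xs @ [x]) @ ys" and ?k = "length (xs @ [x])"
  have "?p ! length xs < ?p ! (?k + i + a)" "?p ! (?k + i + a) < ?p ! (?k + j)"
    if "a < length s" for a
    using that ij below assms(2) unfolding occurs_at_def by (auto simp: nth_append add.assoc)
  moreover have "occurs_at s ?p (?k + i)"
    using ij by (intro occurs_at_append_right) simp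
  moreover have "length xs < ?k + i" "?k + i + length s \<le> ?k + j" "?k + j < length ?p"
    using ij by simp_all
  ultimately show False
    using assms(1) unfolding avoids_min_consec_max_def by (metis append_assoc append_Cons append_Nil)
qed

section \<open>Recurrences for the numbers of avoiders\<close>

lemma count_avoids_consec_submult:
  "count_perms (avoids_consec s) {1..m + n} \<le>
     ((m + n) choose m) * count_perms (avoids_consec s) {1..m} * count_perms (avoids_consec s) {1..n}"
proof -
  let ?A = "avoids_consec s"
  have "count_perms ?A {1..m + n} \<le> (\<Sum>j\<le>m + n. ((m + n) choose j)
          * count_perms (\<lambda>p. ?A p \<and> length p = m) {1..j} * count_perms ?A {1..m + n - j})"
  proof (rule count_perms_split_le[where mid = "[]" and m = "m + n"
        and QL = "\<lambda>p. ?A p \<and> length p = m" and QR = ?A])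
    fix p assume "p \<in> permutations_of_set {1..m + n}" "?A p"
    then show "\<exists>p1 p2. p = p1 @ [] @ p2 \<and> (?A p1 \<and> length p1 = m) \<and> ?A p2"
      using avoids_consec_append[of s "take m p" "drop m p"]
      by (intro exI[of _ "take m p"] exI[of _ "drop m p"])
        (auto simp: length_finite_permutations_of_set)
  qed (simp_all add: order_invariant_avoids_consec order_invariant_length_eq)
  also have "\<dots> = (\<Sum>j\<le>m + n. if j = m
                     then ((m + n) choose m) * count_perms ?A {1..m} * count_perms ?A {1..n} else 0)"
    by (intro sum.cong) (auto simp: count_perms_length_eq)
  also have "\<dots> = ((m + n) choose m) * count_perms ?A {1..m} * count_perms ?A {1..n}"
    by simp
  finally show ?thesis .
qed

text \<open>Cut at the largest entry: an occurrence of \<open>s\<close> before it would be followed by a larger entry.\<close>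

lemma count_avoids_consec_max_Suc_le:
  "count_perms (avoids_consec_max s) {1..Suc n} \<le>
     (\<Sum>j\<le>n. (n choose j) * count_perms (avoids_consec s) {1..j}
              * count_perms (avoids_consec_max s) {1..n - j})"
proof (rule count_perms_split_le[where mid = "[Suc n]" and m = n
      and QL = "avoids_consec s" and QR = "avoids_consec_max s"])
  fix p assume p: "p \<in> permutations_of_set {1..Suc n}" "avoids_consec_max s p"
  have "Suc n \<in> {1..Suc n}"
    by simp
  from p(1) this obtain xs ys
    where p_eq: "p = xs @ Suc n # ys" and entries: "set xs \<union> set ys = {1..Suc n} - {Suc n}"
    by (rule permutations_of_set_split)
  have "\<forall>y\<in>set xs. y < Suc n"
  proof
    fix y assume "y \<in> set xs"
    then have "y \<in> {1..Suc n} - {Suc n}"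
      using entries by blast
    then show "y < Suc n"
      by simp
  qed
  then have "avoids_consec s xs"
    using p(2) p_eq avoids_consec_max_before_max by blast
  moreover have "avoids_consec_max s ys"
    using p(2) p_eq avoids_consec_max_append_right[of s "xs @ [Suc n]" ys] by simp
  ultimately show "\<exists>p1 p2. p = p1 @ [Suc n] @ p2 \<and> avoids_consec s p1 \<and> avoids_consec_max s p2"
    using p_eq by auto
qed (simp_all add: order_invariant_avoids_consec order_invariant_avoids_consec_max)

text \<open>Cut at the smallest entry: an occurrence of \<open>s\<close> after it, followed by a larger entry, would
  complete a framed occurrence together with that smallest entry.\<close>

lemma count_avoids_min_consec_max_Suc_le:
  "count_perms (avoids_min_consec_max s) {1..Suc n} \<le>
     (\<Sum>j\<le>n. (n choose j) * count_perms (avoids_min_consec_max s) {1..j}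
              * count_perms (avoids_consec_max s) {1..n - j})"
proof (rule count_perms_split_le[where mid = "[1]" and m = n
      and QL = "avoids_min_consec_max s" and QR = "avoids_consec_max s"])
  fix p assume p: "p \<in> permutations_of_set {1..Suc n}" "avoids_min_consec_max s p"
  have "1 \<in> {1..Suc n}"
    by simp
  from p(1) this obtain xs ys
    where p_eq: "p = xs @ 1 # ys" and entries: "set xs \<union> set ys = {1..Suc n} - {1}"
    by (rule permutations_of_set_split)
  have "\<forall>y\<in>set ys. 1 < y"
  proof
    fix y assume "y \<in> set ys"
    then have "y \<in> {1..Suc n} - {1}"
      using entries by blast
    then show "1 < y"
      by simp
  qed
  then have "avoids_consec_max s ys"
    using p(2) p_eq avoids_min_consec_max_after_min by blast
  moreover have "avoids_min_consec_max s xs"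
    using p(2) p_eq avoids_min_consec_max_append_left by blast
  ultimately show "\<exists>p1 p2. p = p1 @ [1] @ p2 \<and> avoids_min_consec_max s p1 \<and> avoids_consec_max s p2"
    using p_eq by auto
qed (simp_all add: order_invariant_avoids_min_consec_max order_invariant_avoids_consec_max)

definition perm_density :: "(nat list \<Rightarrow> bool) \<Rightarrow> nat \<Rightarrow> real" where
  "perm_density Q n = count_perms Q {1..n} / fact n"

lemma perm_density_nonneg: "0 \<le> perm_density Q n"
  by (simp add: perm_density_def)

lemma perm_density_le_1: "perm_density Q n \<le> 1"
proof -
  have "count_perms Q {1..n} \<le> fact n"
    using count_perms_le_fact[of "{1..n}" Q] by simp
  then have "real (count_perms Q {1..n}) \<le> fact n"
    by (metis of_nat_fact of_nat_le_iff)
  then show ?thesis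
    by (simp add: perm_density_def)
qed

lemma perm_density_mono:
  "(\<And>p. Q p \<Longrightarrow> Q' p) \<Longrightarrow> perm_density Q n \<le> perm_density Q' n"
  unfolding perm_density_def count_perms_def
  by (intro divide_right_mono of_nat_mono card_mono) auto

lemma convolution_div_fact:
  fixes X :: nat and N1 N2 :: "nat \<Rightarrow> nat"
  assumes "X \<le> (\<Sum>j\<le>n. (n choose j) * N1 j * N2 (n - j))"
  shows "real (Suc n) * (X / fact (Suc n)) \<le> (\<Sum>j\<le>n. N1 j / fact j * (N2 (n - j) / fact (n - j)))"
proof -
  have "real (Suc n) * (X / fact (Suc n)) = X / fact n"
    by (simp add: fact_Suc[of n] del: of_nat_Suc fact_Suc)
  also have "\<dots> \<le> (\<Sum>j\<le>n. (n choose j) * N1 j * N2 (n - j)) / fact n"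
    using assms by (intro divide_right_mono) (simp_all only: of_nat_le_iff, simp)
  also have "\<dots> = (\<Sum>j\<le>n. N1 j / fact j * (N2 (n - j) / fact (n - j)))"
    unfolding sum_divide_distrib of_nat_sum
    by (intro sum.cong refl) (simp add: binomial_fact)
  finally show ?thesis .
qed

lemma perm_density_avoids_consec_submult:
  "perm_density (avoids_consec s) (m + n) \<le> perm_density (avoids_consec s) m * perm_density (avoids_consec s) n"
proof -
  let ?c = "\<lambda>n. real (count_perms (avoids_consec s) {1..n})"
  have "?c (m + n) \<le> ((m + n) choose m) * ?c m * ?c n"
    using count_avoids_consec_submult[of s m n] by (metis of_nat_le_iff of_nat_mult)
  then have "?c (m + n) / fact (m + n) \<le> ((m + n) choose m) * ?c m * ?c n / fact (m + n)"
    by (intro divide_right_mono) simp_all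
  then show ?thesis
    by (simp add: perm_density_def binomial_fact)
qed

lemma perm_density_avoids_consec_max_Suc:
  "real (Suc n) * perm_density (avoids_consec_max s) (Suc n) \<le>
     (\<Sum>j\<le>n. perm_density (avoids_consec_max s) j * perm_density (avoids_consec s) (n - j))"
proof -
  have "real (Suc n) * perm_density (avoids_consec_max s) (Suc n) \<le>
          (\<Sum>j\<le>n. perm_density (avoids_consec s) j * perm_density (avoids_consec_max s) (n - j))"
    unfolding perm_density_def by (rule convolution_div_fact[OF count_avoids_consec_max_Suc_le])
  also have "\<dots> = (\<Sum>j\<le>n. perm_density (avoids_consec_max s) j * perm_density (avoids_consec s) (n - j))"
    by (subst atMost_atLeast0, subst sum.atLeastAtMost_rev) (auto intro: sum.cong)
  finally show ?thesis .
qed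

lemma perm_density_avoids_min_consec_max_Suc:
  "real (Suc n) * perm_density (avoids_min_consec_max s) (Suc n) \<le>
     (\<Sum>j\<le>n. perm_density (avoids_min_consec_max s) j * perm_density (avoids_consec_max s) (n - j))"
  unfolding perm_density_def by (rule convolution_div_fact[OF count_avoids_min_consec_max_Suc_le])

section \<open>Exponential growth rates\<close>

lemma le_power_if_root_le:
  assumes "0 < n" "0 \<le> x" "root n x \<le> c"
  shows "x \<le> c ^ n"
proof -
  have "x = root n x ^ n"
    using assms by simp
  also have "\<dots> \<le> c ^ n"
    using assms by (intro power_mono) (simp_all add: real_root_ge_zero)
  finally show ?thesis .
qed

lemma root_le_if_le_power: "0 < n \<Longrightarrow> 0 \<le> c \<Longrightarrow> x \<le> c ^ n \<Longrightarrow> root n x \<le> c"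
  by (metis real_root_le_iff real_root_power_cancel)

lemma submultiplicative_le_power:
  fixes a :: "nat \<Rightarrow> real"
  assumes a0: "\<And>n. 0 \<le> a n" and a1: "\<And>n. a n \<le> 1" and sm: "\<And>m n. a (m + n) \<le> a m * a n"
  shows "a (q * m + r) \<le> a m ^ q"
proof (induction q)
  case 0
  then show ?case
    using a1 by simp
next
  case (Suc q)
  have "a (Suc q * m + r) \<le> a m * a (q * m + r)"
    using sm[of m "q * m + r"] by (simp add: add.assoc)
  also have "\<dots> \<le> a m * a m ^ q"
    using Suc a0 by (intro mult_left_mono) auto
  finally show ?case
    by simp
qed

lemma submultiplicative_eventually_root_less:
  fixes a :: "nat \<Rightarrow> real"
  assumes a0: "\<And>n. 0 \<le> a n" and a1: "\<And>n. a n \<le> 1" and sm: "\<And>m n. a (m + n) \<le> a m * a n"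
    and m: "1 \<le> m" "root m (a m) < d" and "d \<le> 1"
  shows "\<forall>\<^sub>F n in sequentially. root n (a n) < d"
proof -
  define t where "t = (root m (a m) + d) / 2"
  have "0 \<le> root m (a m)"
    using a0 by (simp add: real_root_ge_zero)
  then have t: "root m (a m) < t" "t < d" "0 < t" "t \<le> 1"
    using m(2) \<open>d \<le> 1\<close> unfolding t_def by simp_all
  have "a m \<le> t ^ m"
    using m t a0[of m] by (intro le_power_if_root_le) simp_all
  then have bound: "a n \<le> t ^ (n - m)" for n
  proof -
    have "a n \<le> a m ^ (n div m)"
      using submultiplicative_le_power[OF a0 a1 sm, of "n div m" m "n mod m"] by simp
    also have "\<dots> \<le> t ^ (m * (n div m))"
      using \<open>a m \<le> t ^ m\<close> a0 by (simp add: power_mult power_mono)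
    also have "\<dots> \<le> t ^ (n - m)"
    proof (rule power_decreasing)
      have "n mod m < m"
        using m by simp
      then show "n - m \<le> m * (n div m)"
        using mult_div_mod_eq[of m n] by linarith
    qed (use t in simp_all)
    finally show ?thesis .
  qed
  have "(\<lambda>n. (t / d) ^ n) \<longlonglongrightarrow> 0"
    using t by (intro LIMSEQ_power_zero) auto
  then have "\<forall>\<^sub>F n in sequentially. (t / d) ^ n < t ^ m"
    using t by (intro order_tendstoD(2)) auto
  then show ?thesis
    using eventually_ge_at_top[of m] eventually_gt_at_top[of 0]
  proof eventually_elim
    case (elim n)
    have "t ^ (n - m) * t ^ m = (t / d) ^ n * d ^ n"
      using elim t by (simp add: power_divide flip: power_add)
    also have "\<dots> < t ^ m * d ^ n"
      using elim t by (intro mult_strict_right_mono) auto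
    finally have "a n < d ^ n"
      using bound[of n] t by (simp add: mult.commute)
    then have "root n (a n) < root n (d ^ n)"
      using elim by simp
    also have "\<dots> = d"
      using elim t by (simp add: real_root_power_cancel)
    finally show ?case .
  qed
qed

lemma submultiplicative_root_convergent:
  fixes a :: "nat \<Rightarrow> real"
  assumes a0: "\<And>n. 0 \<le> a n" and a1: "\<And>n. a n \<le> 1" and sm: "\<And>m n. a (m + n) \<le> a m * a n"
  obtains L where "(\<lambda>n. root n (a n)) \<longlonglongrightarrow> L" "0 \<le> L" "\<And>n. 1 \<le> n \<Longrightarrow> L \<le> root n (a n)"
proof -
  define X where "X = {root n (a n) | n. 1 \<le> n}"
  have X: "X \<noteq> {}" "bdd_below X" "\<forall>x\<in>X. 0 \<le> x"
    using a0 by (auto simp: X_def real_root_ge_zero intro: bdd_belowI[of _ 0])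
  have lower: "Inf X \<le> root n (a n)" if "1 \<le> n" for n
    using X that by (intro cInf_lower) (auto simp: X_def)
  have "(\<lambda>n. root n (a n)) \<longlonglongrightarrow> Inf X"
  proof (rule order_tendstoI)
    fix e assume "e < Inf X"
    show "\<forall>\<^sub>F n in sequentially. e < root n (a n)"
      using eventually_ge_at_top[of 1] by eventually_elim (meson lower less_le_trans \<open>e < Inf X\<close>)
  next
    fix d assume "Inf X < d"
    show "\<forall>\<^sub>F n in sequentially. root n (a n) < d"
    proof (cases "1 < d")
      case True
      show ?thesis
        using eventually_gt_at_top[of 0]
      proof eventually_elim
        case (elim n)
        then have "root n (a n) \<le> 1"
          using a1 by simp
        then show ?case
          using True by simp
      qed
    next
      case False
      obtain m where "1 \<le> m" "root m (a m) < d"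
        using \<open>Inf X < d\<close> X unfolding X_def by (auto simp: cInf_less_iff)
      with False show ?thesis
        by (intro submultiplicative_eventually_root_less[OF a0 a1 sm]) simp_all
    qed
  qed
  moreover have "0 \<le> Inf X"
    using X by (intro cInf_greatest) auto
  ultimately show ?thesis
    using lower that by blast
qed

lemma eventually_le_imp_le_const_mult:
  fixes f g :: "nat \<Rightarrow> real"
  assumes "\<forall>\<^sub>F n in sequentially. f n \<le> g n" and "\<And>n. 0 < g n"
  obtains K where "\<And>n. f n \<le> K * g n"
proof -
  obtain N where N: "\<And>n. N \<le> n \<Longrightarrow> f n \<le> g n"
    using assms(1) unfolding eventually_sequentially by blast
  define K where "K = Max (insert 1 ((\<lambda>n. f n / g n) ` {..<N}))"
  have "f n \<le> K * g n" for n
  proof (cases "n < N")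
    case True
    then have "f n / g n \<le> K"
      unfolding K_def by (intro Max_ge) auto
    then show ?thesis
      using assms(2)[of n] by (simp add: divide_le_eq)
  next
    case False
    have "1 \<le> K"
      unfolding K_def by (intro Max_ge) auto
    then have "g n \<le> K * g n"
      using assms(2)[of n] by simp
    then show ?thesis
      using N[of n] False by simp
  qed
  then show ?thesis
    using that by blast
qed

lemma power_bound_of_growth_factor:
  fixes S :: "nat \<Rightarrow> real" and M :: nat
  assumes S0: "S 0 \<le> 1" and nonneg: "\<And>n. 0 \<le> S n"
    and step: "\<And>n. S (Suc n) \<le> (1 + real M / (real n + 1)) * S n"
  shows "S n \<le> (real n + 1) ^ M"
proof (induction n)
  case 0
  then show ?case
    using S0 by simp
next
  case (Suc n)
  have "0 \<le> 1 + real M / (real n + 1)"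
    by (intro add_nonneg_nonneg divide_nonneg_nonneg) simp_all
  then have "S (Suc n) \<le> (1 + real M * (1 / (real n + 1))) * (real n + 1) ^ M"
    using step[of n] Suc.IH by (simp add: mult_left_mono order_trans)
  also have "\<dots> \<le> (1 + 1 / (real n + 1)) ^ M * (real n + 1) ^ M"
  proof (intro mult_right_mono)
    show "1 + real M * (1 / (real n + 1)) \<le> (1 + 1 / (real n + 1)) ^ M"
      by (rule Bernoulli_inequality) (rule order_trans[of _ 0]; simp)
  qed simp
  also have "\<dots> = (real (Suc n) + 1) ^ M"
    by (simp add: field_simps flip: power_mult_distrib)
  finally show ?case .
qed

lemma convolution_poly_power_bound:
  fixes x y :: "nat \<Rightarrow> real" and M :: nat
  assumes x0: "\<And>n. 0 \<le> x n" and x1: "x 0 \<le> 1" and c: "0 < c"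
    and y: "\<And>n. y n \<le> K * c ^ n" and KM: "K / c \<le> M"
    and conv: "\<And>n. real (Suc n) * x (Suc n) \<le> (\<Sum>j\<le>n. x j * y (n - j))"
  shows "x n \<le> (real n + 1) ^ M * c ^ n"
proof -
  txt \<open>Normalizing by \<open>c ^ j\<close> turns the convolution inequality into
    \<open>S (n + 1) \<le> (1 + M / (n + 1)) * S n\<close>.\<close>
  define S where "S n = (\<Sum>j\<le>n. x j / c ^ j)" for n
  have S_nonneg: "0 \<le> S n" for n
    using x0 c by (simp add: S_def sum_nonneg)
  have S_bound: "S n \<le> (real n + 1) ^ M"
  proof (rule power_bound_of_growth_factor)
    fix n
    have "real (Suc n) * x (Suc n) \<le> (\<Sum>j\<le>n. x j * (K * c ^ (n - j)))"
      using conv[of n] by (rule order_trans) (intro sum_mono mult_left_mono y x0)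
    also have "\<dots> = K * c ^ n * S n"
      unfolding S_def sum_distrib_left using c
      by (intro sum.cong refl) (simp add: field_simps power_diff)
    finally have "real (Suc n) * x (Suc n) / c ^ Suc n \<le> K * c ^ n * S n / c ^ Suc n"
      using c by (intro divide_right_mono) simp_all
    then have "real (Suc n) * (x (Suc n) / c ^ Suc n) \<le> K / c * S n"
      using c by simp
    also have "\<dots> \<le> M * S n"
      using KM S_nonneg by (intro mult_right_mono) auto
    finally have "x (Suc n) / c ^ Suc n \<le> real M / (real n + 1) * S n"
      by (simp add: field_simps)
    then show "S (Suc n) \<le> (1 + real M / (real n + 1)) * S n"
      by (simp add: S_def algebra_simps)
  qed (use x1 S_nonneg in \<open>simp_all add: S_def\<close>)
  have "x n / c ^ n \<le> S n"
    unfolding S_def using x0 c by (intro member_le_sum) auto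
  then have "x n \<le> S n * c ^ n"
    using c by (simp add: divide_le_eq)
  also have "\<dots> \<le> (real n + 1) ^ M * c ^ n"
    using S_bound c by (intro mult_right_mono) simp_all
  finally show ?thesis .
qed

lemma convolution_root_bound:
  fixes x y :: "nat \<Rightarrow> real"
  assumes x0: "\<And>n. 0 \<le> x n" and x1: "x 0 \<le> 1" and y0: "\<And>n. 0 \<le> y n" and L: "0 \<le> L"
    and y_growth: "\<And>d. L < d \<Longrightarrow> \<forall>\<^sub>F n in sequentially. root n (y n) < d"
    and conv: "\<And>n. real (Suc n) * x (Suc n) \<le> (\<Sum>j\<le>n. x j * y (n - j))"
    and "L < d"
  shows "\<forall>\<^sub>F n in sequentially. root n (x n) < d"
proof -
  define c where "c = (2 * L + d) / 3"
  define c' where "c' = (L + 2 * d) / 3"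
  have c: "0 < c" "L < c" "c < c'" "c' < d"
    using L \<open>L < d\<close> by (auto simp: c_def c'_def)
  have y_le: "\<forall>\<^sub>F n in sequentially. y n \<le> c ^ n"
    using y_growth[OF \<open>L < c\<close>] eventually_gt_at_top[of 0]
  proof eventually_elim
    case (elim n)
    then show ?case
      using y0[of n] by (intro le_power_if_root_le) simp_all
  qed
  moreover have "\<And>n. 0 < c ^ n"
    using c by simp
  ultimately obtain K where "\<And>n. y n \<le> K * c ^ n"
    using eventually_le_imp_le_const_mult by blast
  moreover obtain M :: nat where "K / c \<le> M"
    using real_arch_simple by blast
  ultimately have bound: "x n \<le> (real n + 1) ^ M * c ^ n" for n
    using convolution_poly_power_bound[OF x0 x1 \<open>0 < c\<close> _ _ conv] by blast
  have "(\<lambda>n. (real n + 1) ^ M * (c / c') ^ n) \<longlonglongrightarrow> 0"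
    using c by real_asymp
  then have "\<forall>\<^sub>F n in sequentially. (real n + 1) ^ M * (c / c') ^ n < 1"
    by (rule order_tendstoD) simp
  then show ?thesis
    using eventually_gt_at_top[of 0]
  proof eventually_elim
    case (elim n)
    have "x n \<le> (real n + 1) ^ M * (c / c') ^ n * c' ^ n"
      using bound[of n] c by (simp add: power_divide)
    also have "\<dots> \<le> c' ^ n"
      using elim c by (intro mult_left_le_one_le) auto
    finally have "x n \<le> c' ^ n" .
    then have "root n (x n) \<le> c'"
      using elim c by (intro root_le_if_le_power) simp_all
    then show ?case
      using c by simp
  qed
qed

lemma perm_density_avoids_consec_root_convergent:
  obtains L where "(\<lambda>n. root n (perm_density (avoids_consec s) n)) \<longlonglongrightarrow> L" "0 \<le> L"
    "\<And>n. 1 \<le> n \<Longrightarrow> L \<le> root n (perm_density (avoids_consec s) n)"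
  using submultiplicative_root_convergent[where a = "perm_density (avoids_consec s)",
      OF perm_density_nonneg perm_density_le_1 perm_density_avoids_consec_submult] by blast

lemma perm_density_avoids_min_consec_max_root_less:
  assumes "(\<lambda>n. root n (perm_density (avoids_consec s) n)) \<longlonglongrightarrow> L" "0 \<le> L" "L < d"
  shows "\<forall>\<^sub>F n in sequentially. root n (perm_density (avoids_min_consec_max s) n) < d"
proof -
  have "\<forall>\<^sub>F n in sequentially. root n (perm_density (avoids_consec_max s) n) < e" if "L < e" for e
    by (rule convolution_root_bound[where x = "perm_density (avoids_consec_max s)"
          and y = "perm_density (avoids_consec s)", OF perm_density_nonneg perm_density_le_1
          perm_density_nonneg assms(2) order_tendstoD(2)[OF assms(1)]
          perm_density_avoids_consec_max_Suc that])
  then show ?thesis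
    by (rule convolution_root_bound[where x = "perm_density (avoids_min_consec_max s)"
          and y = "perm_density (avoids_consec_max s)", OF perm_density_nonneg perm_density_le_1
          perm_density_nonneg assms(2) _ perm_density_avoids_min_consec_max_Suc assms(3)])
qed

section \<open>Translation to generalized patterns\<close>

lemma consecutive_positions:
  fixes idx :: "nat \<Rightarrow> nat"
  assumes "\<And>j. lo \<le> j \<Longrightarrow> j < hi \<Longrightarrow> idx (j + 1) = idx j + 1" and "lo + a \<le> hi"
  shows "idx (lo + a) = idx lo + a"
  using assms(2)
proof (induction a)
  case (Suc a)
  then show ?case
    using assms(1)[of "lo + a"] by simp
qed simp

lemma less_iff_if_less_imp:
  fixes t :: "nat list" and q :: "nat \<Rightarrow> 'a::linorder"
  assumes "distinct t"
    and mono: "\<And>a b. a < length t \<Longrightarrow> b < length t \<Longrightarrow> t ! a < t ! b \<Longrightarrow> q a < q b"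
    and "a < length t" "b < length t"
  shows "q a < q b \<longleftrightarrow> t ! a < t ! b"
proof
  assume "q a < q b"
  show "t ! a < t ! b"
  proof (rule ccontr)
    assume "\<not> t ! a < t ! b"
    then have "t ! b < t ! a \<or> a = b"
      using assms(1,3,4) nth_eq_iff_index_eq by fastforce
    then show False
      using mono[of b a] assms(3,4) \<open>q a < q b\<close> by auto
  qed
qed (use mono assms(3,4) in blast)

lemma containsI:
  assumes "distinct t" and "\<forall>a<length t. idx a < length p"
    and "\<forall>a b. a < b \<and> b < length t \<longrightarrow> idx a < idx b"
    and "\<forall>j. j + 1 < length t \<and> j \<notin> D \<longrightarrow> idx (j + 1) = idx j + 1"
    and "\<And>a b. a < length t \<Longrightarrow> b < length t \<Longrightarrow> t ! a < t ! b \<Longrightarrow> p ! idx a < p ! idx b"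
  shows "contains p (t, D)"
  unfolding contains_def Let_def fst_conv snd_conv
  using assms less_iff_if_less_imp[OF assms(1), of "\<lambda>x. p ! idx x"] by (intro exI[of _ idx]) blast

lemma contains_consec_iff: "contains p (s, {}) \<longleftrightarrow> (\<exists>i. occurs_at s p i)"
proof
  assume "contains p (s, {})"
  then obtain idx where idx_bound: "\<forall>a<length s. idx a < length p"
    and idx_step: "\<forall>j. j + 1 < length s \<longrightarrow> idx (j + 1) = idx j + 1"
    and idx_order: "\<forall>a<length s. \<forall>b<length s. p ! idx a < p ! idx b \<longleftrightarrow> s ! a < s ! b"
    unfolding contains_def Let_def by auto
  have idx_eq: "idx (0 + a) = idx 0 + a" if "a < length s" for a
    by (rule consecutive_positions[where hi = "length s - 1"]) (use idx_step that in auto)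
  show "\<exists>i. occurs_at s p i"
  proof (cases "s = []")
    case False
    then have "idx 0 + (length s - 1) < length p"
      using idx_bound[rule_format, of "length s - 1"] idx_eq[of "length s - 1"] by simp
    then have "occurs_at s p (idx 0)"
      using idx_order idx_eq unfolding occurs_at_def by (simp flip: add_0)
    then show ?thesis ..
  qed (auto simp: occurs_at_def)
next
  assume "\<exists>i. occurs_at s p i"
  then obtain i where "occurs_at s p i" ..
  then show "contains p (s, {})"
    unfolding contains_def Let_def by (intro exI[of _ "\<lambda>a. i + a"]) (auto simp: occurs_at_def)
qed

lemma avoiders_consec: "avoiders n (s, {}) = count_perms (avoids_consec s) {1..n}"
proof -
  have "{p \<in> perms n. \<not> contains p (s, {})} = {p \<in> permutations_of_set {1..n}. avoids_consec s p}"
    by (auto simp: perms_def permutations_of_set_def avoids_consec_def contains_consec_iff)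
  then show ?thesis
    by (simp add: avoiders_def count_perms_def)
qed

lemma one_sigma_k_nth:
  assumes "x < length s + 2"
  shows "fst (one_sigma_k s) ! x =
           (if x = 0 then 1 else if x \<le> length s then Suc (s ! (x - 1)) else length s + 2)"
  using assms by (auto simp: one_sigma_k_def nth_append nth_Cons')

lemma one_sigma_k_less_cases:
  assumes s: "s \<in> perms (length s)" and ab: "a < length s + 2" "b < length s + 2"
    and less: "fst (one_sigma_k s) ! a < fst (one_sigma_k s) ! b"
  shows "a = 0 \<and> 0 < b \<and> b \<le> length s \<or> a \<le> length s \<and> b = length s + 1 \<or>
         0 < a \<and> a \<le> length s \<and> 0 < b \<and> b \<le> length s \<and> s ! (a - 1) < s ! (b - 1)"
proof -
  let ?t = "fst (one_sigma_k s)"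
  have "set ?t = {1..length s + 2}" "length ?t = length s + 2"
    using s by (auto simp: one_sigma_k_def perms_def)
  then have "1 \<le> ?t ! x \<and> ?t ! x \<le> length s + 2" if "x < length s + 2" for x
    using nth_mem[of x ?t] that by auto
  from this[OF ab(1)] this[OF ab(2)] ab less show ?thesis
    unfolding one_sigma_k_nth[OF ab(1)] one_sigma_k_nth[OF ab(2)] by (auto split: if_splits)
qed

lemma contains_one_sigma_k_imp:
  assumes s: "s \<in> perms (length s)" "s \<noteq> []" and "contains p (one_sigma_k s)"
  shows "\<not> avoids_min_consec_max s p"
proof -
  define m where "m = length s"
  define t where "t = fst (one_sigma_k s)"
  have m: "1 \<le> m"
    using s(2) by (simp add: m_def Suc_le_eq)
  have s_range: "1 \<le> s ! a \<and> s ! a \<le> m" if "a < m" for a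
    using s(1) nth_mem[of a s] that by (auto simp: m_def perms_def)
  have t_nth: "t ! x = (if x = 0 then 1 else if x \<le> m then Suc (s ! (x - 1)) else m + 2)"
    if "x < m + 2" for x
    using that one_sigma_k_nth unfolding t_def m_def by blast
  have "one_sigma_k s = (t, {0, m})" "length t = m + 2"
    by (simp_all add: one_sigma_k_def t_def m_def)
  then obtain idx where idx_bound: "\<forall>a<m + 2. idx a < length p"
    and idx_mono: "\<forall>a b. a < b \<and> b < m + 2 \<longrightarrow> idx a < idx b"
    and idx_step: "\<forall>j. j + 1 < m + 2 \<and> j \<notin> {0, m} \<longrightarrow> idx (j + 1) = idx j + 1"
    and idx_order: "\<forall>a<m + 2. \<forall>b<m + 2. p ! idx a < p ! idx b \<longleftrightarrow> t ! a < t ! b"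
    using assms(3) unfolding contains_def Let_def by auto
  define i where "i = idx 1"
  have idx_eq: "idx (1 + a) = i + a" if "a < m" for a
    unfolding i_def by (rule consecutive_positions[where hi = m]) (use idx_step that in auto)
  have h_i: "idx 0 < i" and j_bound: "idx (m + 1) < length p"
    using idx_mono idx_bound by (auto simp: i_def)
  have "idx m = i + (m - 1)"
    using idx_eq[of "m - 1"] m by simp
  moreover have "idx m < idx (m + 1)"
    using idx_mono[rule_format, of m "m + 1"] by simp
  ultimately have i_j: "i + m \<le> idx (m + 1)"
    using m by linarith
  have "occurs_at s p i"
    unfolding occurs_at_def m_def[symmetric]
  proof
    show "i + m \<le> length p"
      using i_j j_bound by simp
    show "\<forall>a<m. \<forall>b<m. p ! (i + a) < p ! (i + b) \<longleftrightarrow> s ! a < s ! b"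
    proof (intro allI impI)
      fix a b assume "a < m" "b < m"
      then show "p ! (i + a) < p ! (i + b) \<longleftrightarrow> s ! a < s ! b"
        using idx_order[rule_format, of "a + 1" "b + 1"] idx_eq t_nth by simp
    qed
  qed
  moreover have "p ! idx 0 < p ! (i + a)" "p ! (i + a) < p ! idx (m + 1)" if "a < m" for a
    using idx_order[rule_format, of 0 "a + 1"] idx_order[rule_format, of "a + 1" "m + 1"]
      idx_eq[OF that] t_nth s_range[OF that] that
    by simp_all
  ultimately show ?thesis
    using h_i i_j j_bound unfolding avoids_min_consec_max_def m_def[symmetric] by blast
qed

lemma contains_one_sigma_k_if:
  assumes s: "s \<in> perms (length s)" "s \<noteq> []" and "\<not> avoids_min_consec_max s p"
  shows "contains p (one_sigma_k s)"
proof -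
  define m where "m = length s"
  define t where "t = fst (one_sigma_k s)"
  have m: "1 \<le> m"
    using s(2) by (simp add: m_def Suc_le_eq)
  obtain h i j where occ: "occurs_at s p i" and hij: "h < i" "i + m \<le> j" "j < length p"
    and below: "\<forall>a<m. p ! h < p ! (i + a)" and above: "\<forall>a<m. p ! (i + a) < p ! j"
    using assms(3) unfolding avoids_min_consec_max_def m_def by blast
  have occ_order: "\<forall>a<m. \<forall>b<m. p ! (i + a) < p ! (i + b) \<longleftrightarrow> s ! a < s ! b"
    using occ unfolding occurs_at_def m_def by blast
  have h_j: "p ! h < p ! j"
    using below above m by (meson less_trans less_le_trans zero_less_one)
  define idx where "idx x = (if x = 0 then h else if x \<le> m then i + (x - 1) else j)" for x
  have order: "p ! idx a < p ! idx b" if ab: "a < m + 2" "b < m + 2" and lt: "t ! a < t ! b" for a b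
  proof -
    consider (from_first) "a = 0" "0 < b" "b \<le> m" | (to_last) "a \<le> m" "b = m + 1"
      | (inner) "0 < a" "a \<le> m" "0 < b" "b \<le> m" "s ! (a - 1) < s ! (b - 1)"
      using one_sigma_k_less_cases[OF s(1), of a b] ab lt unfolding t_def m_def by blast
    then show ?thesis
    proof cases
      case from_first
      then show ?thesis
        using below[rule_format, of "b - 1"] by (simp add: idx_def)
    next
      case to_last
      then show ?thesis
        using above[rule_format, of "a - 1"] h_j by (cases "a = 0") (simp_all add: idx_def)
    next
      case inner
      then have "p ! (i + (a - 1)) < p ! (i + (b - 1))"
        using occ_order[rule_format, of "a - 1" "b - 1"] by simp
      then show ?thesis
        using inner by (simp add: idx_def)
    qed
  qed
  have pattern: "one_sigma_k s = (t, {0, m})" and t: "length t = m + 2" "distinct t"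
    using s(1) by (simp_all add: one_sigma_k_def t_def m_def perms_def distinct_map)
  have "\<forall>a b. a < b \<and> b < m + 2 \<longrightarrow> idx a < idx b" "\<forall>a<m + 2. idx a < length p"
    "\<forall>x. x + 1 < m + 2 \<and> x \<notin> {0, m} \<longrightarrow> idx (x + 1) = idx x + 1"
    using hij m by (auto simp: idx_def)
  then have "contains p (t, {0, m})"
    by (intro containsI) (use order t in simp_all)
  then show ?thesis
    unfolding pattern .
qed

lemma contains_one_sigma_k_iff:
  assumes "s \<in> perms (length s)" "s \<noteq> []"
  shows "contains p (one_sigma_k s) \<longleftrightarrow> \<not> avoids_min_consec_max s p"
  using contains_one_sigma_k_imp[OF assms] contains_one_sigma_k_if[OF assms] by blast

lemma avoiders_one_sigma_k:
  assumes "s \<in> perms (length s)" "s \<noteq> []"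
  shows "avoiders n (one_sigma_k s) = count_perms (avoids_min_consec_max s) {1..n}"
proof -
  have "{p \<in> perms n. \<not> contains p (one_sigma_k s)} =
          {p \<in> permutations_of_set {1..n}. avoids_min_consec_max s p}"
    by (auto simp: perms_def permutations_of_set_def contains_one_sigma_k_iff[OF assms])
  then show ?thesis
    by (simp add: avoiders_def count_perms_def)
qed

theorem mainTheorem13:
  fixes k :: nat and \<sigma> :: "nat list"
  assumes "k \<ge> 4" and "\<sigma> \<in> perms (k - 2)"
  shows "\<exists>L. (\<lambda>n. root n (real (avoiders n (one_sigma_k \<sigma>)) / fact n)) \<longlonglongrightarrow> L
            \<and> (\<lambda>n. root n (real (avoiders n (\<sigma>, {})) / fact n)) \<longlonglongrightarrow> L"
proof -
  have "length \<sigma> = k - 2"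
    using assms(2) distinct_card[of \<sigma>] by (simp add: perms_def)
  then have \<sigma>: "\<sigma> \<in> perms (length \<sigma>)" "\<sigma> \<noteq> []"
    using assms by auto
  define a where "a = perm_density (avoids_consec \<sigma>)"
  define t where "t = perm_density (avoids_min_consec_max \<sigma>)"
  obtain L where a_lim: "(\<lambda>n. root n (a n)) \<longlonglongrightarrow> L" and "0 \<le> L"
    and a_ge: "\<And>n. 1 \<le> n \<Longrightarrow> L \<le> root n (a n)"
    unfolding a_def using perm_density_avoids_consec_root_convergent[of \<sigma>] by blast
  have "(\<lambda>n. root n (t n)) \<longlonglongrightarrow> L"
  proof (rule order_tendstoI)
    fix e assume "e < L"
    have "a n \<le> t n" for n
      unfolding a_def t_def by (intro perm_density_mono avoids_consec_imp_avoids_min_consec_max)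
    then have "e < root n (t n)" if "1 \<le> n" for n
      using a_ge[OF that] \<open>e < L\<close> that by (meson less_le_trans real_root_le_mono zero_less_one)
    then show "\<forall>\<^sub>F n in sequentially. e < root n (t n)"
      using eventually_ge_at_top[of 1] by (rule eventually_mono[rotated])
  next
    fix d assume "L < d"
    then show "\<forall>\<^sub>F n in sequentially. root n (t n) < d"
      using a_lim \<open>0 \<le> L\<close> unfolding a_def t_def by (intro perm_density_avoids_min_consec_max_root_less)
  qed
  then show ?thesis
    using a_lim by (auto simp: a_def t_def perm_density_def avoiders_consec avoiders_one_sigma_k[OF \<sigma>])
qed

end
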